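(* Consider the regular partially labeled binary broadcasting tree $\text{Tree}_{k=2}(\theta,d,\delta)$ (see context), and let $\mu^{+}_{\ell_{T_{\leq t}(\rho)}}$ and $\mu^{-}_{\ell_{T_{\leq t}(\rho)}}$ be the distributions of the revealed labels $\ell_{T_{\leq t}(\rho)}$ conditionally on $\ell(\rho)=+$ and $\ell(\rho)=-$ respectively. Assume $\delta d>1$, $(1-\delta)\theta^2 d<1$, and $2\delta d\log\big(1+\frac{4\theta^2}{1-\theta^2}\big)<[1-(1-\delta)\theta^2 d]^2$. Then for any $t>0$, $$d_{\rm TV}^2\big(\mu^{+}_{\ell_{T_{\leq t}(\rho)}},\mu^{-}_{\ell_{T_{\leq t}(\rho)}}\big)\leq \frac{2\delta d\log\big(1+\frac{4\theta^2}{1-\theta^2}\big)}{1-(1-\delta)\theta^2 d},$$ and consequently $$\inf_\Phi\sup_{\ell(\rho)\in\{+,-\}}\mathbb{P}\big(\Phi(\ell_{T_{\leq t}(\rho)})\neq\ell(\rho)\big)\geq \frac12-C\Big\{\frac{\delta d\log\big(1+\frac{4\theta^2}{1-\theta^2}\big)}{1-(1-\delta)\theta^2 d}\Big\}^{1/2},$$ where the infimum is over all estimators $\Phi$ mapping the revealed labels of the depth-$t$ tree to $\{+,-\}$ and $C>0$ is a universal constant.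
   Context: $\text{Tree}_{k=2}(\theta,d,\delta)$ (regular version): a rooted tree in which every vertex has $d$ children, exactly $\delta d$ of which have revealed labels and $(1-\delta)d$ unlabeled. The root label $\ell(\rho)\in\{+,-\}$ is unrevealed; each child copies its parent's label with probability $\frac{1+\theta}{2}$ and takes the opposite label with probability $\frac{1-\theta}{2}$, independently, $0<\theta<1$. $\ell_{T_{\leq t}(\rho)}$ is the collection of revealed labels at depth $\leq t$. *)

theory Defs
  imports "HOL-Probability.Probability"
begin

text \<open>Vertices of the d-regular tree up to depth t: root is [], the i-th child
 of v is v @ [i] with i < d.  A non-root vertex v is revealed iff its child
 index last v is < m (m = delta d revealed children per vertex).
 Labels are booleans (True = +).\<close>

definition tree_vertices :: "nat \<Rightarrow> nat \<Rightarrow> nat list set" where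
  "tree_vertices d t = {v. length v \<le> t \<and> (\<forall>i\<in>set v. i < d)}"

definition revealed_vertices :: "nat \<Rightarrow> nat \<Rightarrow> nat \<Rightarrow> nat list set" where
  "revealed_vertices d m t = {v \<in> tree_vertices d t. v \<noteq> [] \<and> last v < m}"

text \<open>Independent edge flips: the edge into non-root vertex w flips the label
 (f w = True) with probability (1 - theta)/2.\<close>
definition edge_flips :: "real \<Rightarrow> nat \<Rightarrow> nat \<Rightarrow> (nat list \<Rightarrow> bool) pmf" where
  "edge_flips \<theta> d t = Pi_pmf (tree_vertices d t - {[]}) False
      (\<lambda>_. bernoulli_pmf ((1 - \<theta>) / 2))"

definition vertex_label :: "bool \<Rightarrow> (nat list \<Rightarrow> bool) \<Rightarrow> nat list \<Rightarrow> bool" where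
  "vertex_label s f v = (s \<noteq> odd (card {k \<in> {1..length v}. f (take k v)}))"

definition revealed_dist ::
  "real \<Rightarrow> nat \<Rightarrow> nat \<Rightarrow> nat \<Rightarrow> bool \<Rightarrow> (nat list \<Rightarrow> bool option) pmf" where
  "revealed_dist \<theta> d m t s = map_pmf
     (\<lambda>f v. if v \<in> revealed_vertices d m t then Some (vertex_label s f v) else None)
     (edge_flips \<theta> d t)"

definition tv_dist :: "'a pmf \<Rightarrow> 'a pmf \<Rightarrow> real" where
  "tv_dist p q = (SUP A. \<bar>measure_pmf.prob p A - measure_pmf.prob q A\<bar>)"

end

theory Submission
  imports Defs
begin

text \<open>Track the Bhattacharyya coefficient \<open>BC(P, Q) = \<Sum>x. sqrt (P x * Q x)\<close> of the two
  root-conditional laws down the tree.  It can only grow when observations are coarsened, it is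
  multiplicative over the independent subtrees of the root's \<open>d\<close> children, and a noisy edge
  contracts \<open>1 - BC\<close> by the factor \<open>\<theta>\<^sup>2\<close>.  Hence the coefficient \<open>\<beta> t\<close> at depth \<open>t\<close> satisfies
  \<open>\<beta> (t + 1) \<ge> (1 - \<theta>\<^sup>2) ^ m * (1 - \<theta>\<^sup>2 * (1 - \<beta> t)) ^ (d - m)\<close> with \<open>m = \<delta> d\<close> revealed
  children, and the hypotheses make \<open>\<beta> t \<ge> exp (- G)\<close> an invariant, where
  \<open>G = \<delta> d log (1 + 4\<theta>\<^sup>2 / (1 - \<theta>\<^sup>2)) / (1 - (1 - \<delta>) \<theta>\<^sup>2 d)\<close>.  Finally
  \<open>d\<^sub>T\<^sub>V\<^sup>2 \<le> 1 - BC\<^sup>2 \<le> 2G\<close>, and Le Cam's two-point argument bounds the testing error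
  (with \<open>C = 1\<close>).\<close>

definition bhattacharyya :: "'a pmf \<Rightarrow> 'a pmf \<Rightarrow> real" where
  "bhattacharyya p q = (\<Sum>x\<in>set_pmf p. sqrt (pmf p x * pmf q x))"

lemma bhattacharyya_conv_sum:
  assumes "finite S" "set_pmf p \<subseteq> S"
  shows "bhattacharyya p q = (\<Sum>x\<in>S. sqrt (pmf p x * pmf q x))"
  unfolding bhattacharyya_def
  by (rule sum.mono_neutral_left) (use assms in \<open>auto simp: set_pmf_eq\<close>)

lemma bhattacharyya_nonneg: "bhattacharyya p q \<ge> 0"
  unfolding bhattacharyya_def by (intro sum_nonneg) auto

lemma sum_sqrt_pmf_diff_sq:
  assumes "finite S" "set_pmf p \<subseteq> S" "set_pmf q \<subseteq> S"
  shows "(\<Sum>x\<in>S. (sqrt (pmf p x) - sqrt (pmf q x))\<^sup>2) = 2 * (1 - bhattacharyya p q)"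
proof -
  have "sum (pmf p) S = 1" "sum (pmf q) S = 1"
    using assms by (auto intro!: sum_pmf_eq_1)
  thus ?thesis
    using bhattacharyya_conv_sum[OF assms(1,2), of q]
    by (simp add: power2_eq_square algebra_simps sum.distrib sum_subtractf sum_distrib_left
                  real_sqrt_mult)
qed

lemma sum_sqrt_pmf_add_sq:
  assumes "finite S" "set_pmf p \<subseteq> S" "set_pmf q \<subseteq> S"
  shows "(\<Sum>x\<in>S. (sqrt (pmf p x) + sqrt (pmf q x))\<^sup>2) = 2 * (1 + bhattacharyya p q)"
proof -
  have "sum (pmf p) S = 1" "sum (pmf q) S = 1"
    using assms by (auto intro!: sum_pmf_eq_1)
  thus ?thesis
    using bhattacharyya_conv_sum[OF assms(1,2), of q]
    by (simp add: power2_eq_square algebra_simps sum.distrib sum_distrib_left real_sqrt_mult)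
qed

lemma sum_sqrt_mult_le:
  fixes a b :: "'a \<Rightarrow> real"
  assumes "\<And>i. i \<in> A \<Longrightarrow> a i \<ge> 0" "\<And>i. i \<in> A \<Longrightarrow> b i \<ge> 0"
  shows "(\<Sum>i\<in>A. sqrt (a i * b i)) \<le> sqrt (sum a A * sum b A)"
proof (rule real_le_rsqrt)
  have "(\<Sum>i\<in>A. sqrt (a i) * sqrt (b i))\<^sup>2 \<le> (\<Sum>i\<in>A. (sqrt (a i))\<^sup>2) * (\<Sum>i\<in>A. (sqrt (b i))\<^sup>2)"
    by (rule Cauchy_Schwarz_ineq_sum)
  also have "\<dots> = sum a A * sum b A"
    using assms by simp
  finally show "(\<Sum>i\<in>A. sqrt (a i * b i))\<^sup>2 \<le> sum a A * sum b A"
    by (simp add: real_sqrt_mult)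
qed

lemma pmf_map_pmf_eq_sum:
  assumes "finite (set_pmf p)"
  shows "pmf (map_pmf g p) y = (\<Sum>x\<in>{x\<in>set_pmf p. g x = y}. pmf p x)"
proof -
  have "pmf (map_pmf g p) y = measure p (g -` {y})" by (rule pmf_map)
  also have "\<dots> = measure p {x\<in>set_pmf p. g x = y}"
    by (intro measure_prob_cong_0) (auto simp: set_pmf_eq)
  also have "\<dots> = (\<Sum>x\<in>{x\<in>set_pmf p. g x = y}. pmf p x)"
    using assms by (intro measure_measure_pmf_finite) auto
  finally show ?thesis .
qed

lemma pmf_map_pmf_ge_sum:
  assumes "finite B"
  shows "(\<Sum>x\<in>{x\<in>B. g x = y}. pmf q x) \<le> pmf (map_pmf g q) y"
proof -
  have "(\<Sum>x\<in>{x\<in>B. g x = y}. pmf q x) = measure q {x\<in>B. g x = y}"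
    using assms by (intro measure_measure_pmf_finite[symmetric]) auto
  also have "\<dots> \<le> measure q (g -` {y})"
    by (intro measure_pmf.finite_measure_mono) auto
  also have "\<dots> = pmf (map_pmf g q) y" by (rule pmf_map[symmetric])
  finally show ?thesis .
qed

lemma bhattacharyya_map_pmf_ge:
  assumes fin: "finite (set_pmf p)"
  shows "bhattacharyya p q \<le> bhattacharyya (map_pmf g p) (map_pmf g q)"
proof -
  let ?S = "set_pmf p"
  let ?F = "\<lambda>y. {x\<in>?S. g x = y}"
  have "bhattacharyya p q = (\<Sum>y\<in>g ` ?S. \<Sum>x\<in>?F y. sqrt (pmf p x * pmf q x))"
    unfolding bhattacharyya_def by (rule sum.image_gen[OF fin])
  also have "\<dots> \<le> (\<Sum>y\<in>g ` ?S. sqrt (pmf (map_pmf g p) y * pmf (map_pmf g q) y))"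
  proof (rule sum_mono)
    fix y
    have "(\<Sum>x\<in>?F y. sqrt (pmf p x * pmf q x)) \<le> sqrt (sum (pmf p) (?F y) * sum (pmf q) (?F y))"
      by (rule sum_sqrt_mult_le) auto
    also have "\<dots> \<le> sqrt (pmf (map_pmf g p) y * pmf (map_pmf g q) y)"
      unfolding pmf_map_pmf_eq_sum[OF fin]
      by (intro real_sqrt_le_mono mult_left_mono pmf_map_pmf_ge_sum sum_nonneg) (use fin in auto)
    finally show "(\<Sum>x\<in>?F y. sqrt (pmf p x * pmf q x))
                    \<le> sqrt (pmf (map_pmf g p) y * pmf (map_pmf g q) y)" .
  qed
  also have "\<dots> = bhattacharyya (map_pmf g p) (map_pmf g q)"
    by (simp add: bhattacharyya_def)
  finally show ?thesis .
qed

lemma bhattacharyya_Pi_pmf: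
  assumes A: "finite A" and fin: "\<And>i. i \<in> A \<Longrightarrow> finite (set_pmf (p i))"
  shows "bhattacharyya (Pi_pmf A dflt p) (Pi_pmf A dflt q) = (\<Prod>i\<in>A. bhattacharyya (p i) (q i))"
proof -
  let ?B = "\<lambda>i. set_pmf (p i)"
  let ?e = "\<lambda>h x. if x \<in> A then h x else dflt"
  let ?r = "\<lambda>f. \<Prod>i\<in>A. sqrt (pmf (p i) (f i) * pmf (q i) (f i))"
  have sqrt_prod: "sqrt (prod g A) = (\<Prod>i\<in>A. sqrt (g i))" for g :: "'a \<Rightarrow> real"
    using A by (induct rule: finite_induct) (auto simp: real_sqrt_mult)
  have "bhattacharyya (Pi_pmf A dflt p) (Pi_pmf A dflt q) = (\<Sum>f\<in>PiE_dflt A dflt (set_pmf \<circ> p). ?r f)"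
    unfolding bhattacharyya_def set_Pi_pmf[OF A]
    by (intro sum.cong refl)
       (auto simp: pmf_Pi[OF A] PiE_dflt_def prod.distrib[symmetric] sqrt_prod)
  also have "PiE_dflt A dflt (set_pmf \<circ> p) = ?e ` PiE A ?B"
    by (simp add: dflt_image_PiE[symmetric] o_def)
  also have "(\<Sum>f\<in>?e ` PiE A ?B. ?r f) = (\<Sum>h\<in>PiE A ?B. ?r h)"
  proof (subst sum.reindex)
    show "inj_on ?e (PiE A ?B)"
      by (auto simp: inj_on_def fun_eq_iff PiE_def extensional_def) metis
  qed (auto intro!: sum.cong prod.cong)
  also have "\<dots> = (\<Prod>i\<in>A. \<Sum>y\<in>?B i. sqrt (pmf (p i) y * pmf (q i) y))"
    by (rule prod_sum_PiE[symmetric]) (use A fin in auto)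
  finally show ?thesis by (simp add: bhattacharyya_def)
qed

lemma sqrt_convex_comb_le:
  fixes a b p r :: real
  assumes "a \<ge> 0" "b \<ge> 0" "a + b = 1" "p \<ge> 0" "r \<ge> 0"
  shows "a * sqrt p + b * sqrt r \<le> sqrt (a * p + b * r)"
proof (rule real_le_rsqrt)
  have "a * p + b * r = (a + b) * (a * (sqrt p)\<^sup>2 + b * (sqrt r)\<^sup>2)"
    using assms by simp
  hence "a * p + b * r - (a * sqrt p + b * sqrt r)\<^sup>2 = a * b * (sqrt p - sqrt r)\<^sup>2"
    by (simp add: power2_eq_square algebra_simps)
  moreover have "a * b * (sqrt p - sqrt r)\<^sup>2 \<ge> 0" using assms by simp
  ultimately show "(a * sqrt p + b * sqrt r)\<^sup>2 \<le> a * p + b * r" by linarith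
qed

text \<open>The binary channel with crossover weight \<open>b\<close> contracts the Hellinger integrand: write
  \<open>x - y = (a - b)(p - r)\<close> as a difference of squares and use \<open>sqrt p + sqrt r \<le> sqrt x + sqrt y\<close>,
  which is concavity of \<open>sqrt\<close>.\<close>
lemma sqrt_mixture_diff_sq_le:
  fixes a b p r :: real
  assumes ab: "a \<ge> 0" "b \<ge> 0" "a + b = 1" and pr: "p \<ge> 0" "r \<ge> 0"
  defines "x \<equiv> a * p + b * r" and "y \<equiv> b * p + a * r"
  shows "(sqrt x - sqrt y)\<^sup>2 \<le> (a - b)\<^sup>2 * (sqrt p - sqrt r)\<^sup>2"
proof (cases "sqrt p + sqrt r = 0")
  case True
  hence "p = 0" "r = 0" using pr by (simp_all add: add_nonneg_eq_0_iff)
  thus ?thesis by (simp add: x_def y_def)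
next
  case False
  have xy: "x \<ge> 0" "y \<ge> 0" using ab pr by (simp_all add: x_def y_def)
  have W: "sqrt p + sqrt r > 0" using False pr by (simp add: add_pos_nonneg order_le_neq_trans)
  have "a * sqrt p + b * sqrt r \<le> sqrt x"
    unfolding x_def by (rule sqrt_convex_comb_le) (use ab pr in auto)
  moreover have "b * sqrt p + a * sqrt r \<le> sqrt y"
    unfolding y_def by (rule sqrt_convex_comb_le) (use ab pr in auto)
  moreover have "sqrt p + sqrt r = (a * sqrt p + b * sqrt r) + (b * sqrt p + a * sqrt r)"
    using ab by (metis add.commute add.left_commute distrib_right mult_1)
  ultimately have "(sqrt p + sqrt r)\<^sup>2 \<le> (sqrt x + sqrt y)\<^sup>2"
    using W by (intro power_mono) auto
  hence "(sqrt x - sqrt y)\<^sup>2 * (sqrt p + sqrt r)\<^sup>2 \<le> (sqrt x - sqrt y)\<^sup>2 * (sqrt x + sqrt y)\<^sup>2"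
    by (intro mult_left_mono) auto
  also have "\<dots> = (x - y)\<^sup>2"
    using xy by (simp add: power_mult_distrib[symmetric] algebra_simps real_sqrt_mult_self)
  also have "x - y = (a - b) * ((sqrt p - sqrt r) * (sqrt p + sqrt r))"
    using pr by (simp add: x_def y_def algebra_simps real_sqrt_mult_self)
  also have "((a - b) * ((sqrt p - sqrt r) * (sqrt p + sqrt r)))\<^sup>2
             = ((a - b)\<^sup>2 * (sqrt p - sqrt r)\<^sup>2) * (sqrt p + sqrt r)\<^sup>2"
    by (simp add: power_mult_distrib)
  finally show ?thesis using W by (simp add: mult_le_cancel_right)
qed

lemma bhattacharyya_mixture:
  assumes f1: "finite (set_pmf P1)" and f0: "finite (set_pmf P0)"
    and ab: "a \<ge> 0" "b \<ge> 0" "a + b = 1"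
    and K1: "\<And>x. pmf K1 x = a * pmf P1 x + b * pmf P0 x"
    and K0: "\<And>x. pmf K0 x = b * pmf P1 x + a * pmf P0 x"
  shows "1 - bhattacharyya K1 K0 \<le> (a - b)\<^sup>2 * (1 - bhattacharyya P1 P0)"
proof -
  define S where "S = set_pmf P1 \<union> set_pmf P0"
  have S: "finite S" "set_pmf P1 \<subseteq> S" "set_pmf P0 \<subseteq> S" using f1 f0 by (auto simp: S_def)
  have sK: "set_pmf K1 \<subseteq> S" "set_pmf K0 \<subseteq> S" by (auto simp: S_def set_pmf_eq K1 K0)
  have "(\<Sum>x\<in>S. (sqrt (pmf K1 x) - sqrt (pmf K0 x))\<^sup>2)
          \<le> (\<Sum>x\<in>S. (a - b)\<^sup>2 * (sqrt (pmf P1 x) - sqrt (pmf P0 x))\<^sup>2)"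
    unfolding K1 K0 by (intro sum_mono sqrt_mixture_diff_sq_le) (use ab in auto)
  hence "2 * (1 - bhattacharyya K1 K0) \<le> (a - b)\<^sup>2 * (2 * (1 - bhattacharyya P1 P0))"
    by (simp add: sum_sqrt_pmf_diff_sq S sK flip: sum_distrib_left)
  thus ?thesis by (simp add: algebra_simps)
qed

lemma measure_pmf_prob_diff_le_bhattacharyya:
  assumes fp: "finite (set_pmf P)" and fq: "finite (set_pmf Q)"
  shows "\<bar>measure_pmf.prob P A - measure_pmf.prob Q A\<bar> \<le> sqrt (1 - (bhattacharyya P Q)\<^sup>2)"
proof -
  define S where "S = set_pmf P \<union> set_pmf Q"
  have S: "finite S" "set_pmf P \<subseteq> S" "set_pmf Q \<subseteq> S" using fp fq by (auto simp: S_def)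
  define e where "e x = (if x \<in> A then 1 else -1::real)" for x
  define u where "u x = e x * (sqrt (pmf P x) - sqrt (pmf Q x))" for x
  define w where "w x = sqrt (pmf P x) + sqrt (pmf Q x)" for x
  have prob: "measure_pmf.prob R A = sum (pmf R) (S \<inter> A)" if "set_pmf R \<subseteq> S" for R
  proof -
    have "measure_pmf.prob R A = measure_pmf.prob R (S \<inter> A)"
      using that by (intro measure_prob_cong_0) (auto simp: set_pmf_eq)
    thus ?thesis using S by (simp add: measure_measure_pmf_finite)
  qed
  have total: "sum (pmf R) (S \<inter> A) + sum (pmf R) (S - A) = 1" if "set_pmf R \<subseteq> S" for R
    using S that by (subst sum.Int_Diff[symmetric]) (auto intro!: sum_pmf_eq_1)
  have "(\<Sum>x\<in>S. u x * w x) = (\<Sum>x\<in>S. e x * (pmf P x - pmf Q x))"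
    by (intro sum.cong refl) (simp add: u_def w_def algebra_simps)
  also have "\<dots> = (sum (pmf P) (S \<inter> A) - sum (pmf Q) (S \<inter> A))
                 - (sum (pmf P) (S - A) - sum (pmf Q) (S - A))"
    using S by (subst sum.Int_Diff[of S _ A]) (simp_all add: e_def sum_subtractf sum_negf)
  also have "\<dots> = 2 * (measure_pmf.prob P A - measure_pmf.prob Q A)"
    using total[of P] total[of Q] S by (simp add: prob)
  finally have eq: "2 * (measure_pmf.prob P A - measure_pmf.prob Q A) = (\<Sum>x\<in>S. u x * w x)" ..
  have "(\<Sum>x\<in>S. u x * w x)\<^sup>2 \<le> (\<Sum>x\<in>S. (u x)\<^sup>2) * (\<Sum>x\<in>S. (w x)\<^sup>2)"
    by (rule Cauchy_Schwarz_ineq_sum)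
  also have "(\<Sum>x\<in>S. (u x)\<^sup>2) = (\<Sum>x\<in>S. (sqrt (pmf P x) - sqrt (pmf Q x))\<^sup>2)"
    by (intro sum.cong) (simp_all add: u_def e_def power_mult_distrib)
  also have "\<dots> * (\<Sum>x\<in>S. (w x)\<^sup>2) = 2 * (1 - bhattacharyya P Q) * (2 * (1 + bhattacharyya P Q))"
    unfolding w_def using S by (simp add: sum_sqrt_pmf_diff_sq sum_sqrt_pmf_add_sq)
  finally have "(measure_pmf.prob P A - measure_pmf.prob Q A)\<^sup>2 \<le> 1 - (bhattacharyya P Q)\<^sup>2"
    unfolding eq[symmetric] by (simp add: power2_eq_square algebra_simps)
  thus ?thesis by (metis real_sqrt_abs real_sqrt_le_mono)
qed

definition graft :: "nat \<Rightarrow> 'b \<Rightarrow> (nat \<Rightarrow> 'b \<times> (nat list \<Rightarrow> 'b)) \<Rightarrow> nat list \<Rightarrow> 'b" where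
  "graft d z h v = (case v of [] \<Rightarrow> z
     | i # w \<Rightarrow> if i < d then if w = [] then fst (h i) else snd (h i) w else z)"

lemma graft_cong: "(\<And>i. i < d \<Longrightarrow> h i = h' i) \<Longrightarrow> graft d z h = graft d z h'"
  by (auto simp: fun_eq_iff graft_def split: list.split)

lemma inj_on_graft:
  "inj_on (graft d z) {h. \<forall>i. (i < d \<longrightarrow> snd (h i) [] = z) \<and> (\<not> i < d \<longrightarrow> h i = (z, \<lambda>_. z))}"
proof (rule inj_onI, rule ext)
  fix h1 h2 i
  assume h1: "h1 \<in> {h. \<forall>i. (i < d \<longrightarrow> snd (h i) [] = z) \<and> (\<not> i < d \<longrightarrow> h i = (z, \<lambda>_. z))}"
    and h2: "h2 \<in> {h. \<forall>i. (i < d \<longrightarrow> snd (h i) [] = z) \<and> (\<not> i < d \<longrightarrow> h i = (z, \<lambda>_. z))}"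
    and eq: "graft d z h1 = graft d z h2"
  show "h1 i = h2 i"
  proof (cases "i < d")
    case True
    have "fst (h1 i) = fst (h2 i)" using fun_cong[OF eq, of "[i]"] True by (simp add: graft_def)
    moreover have "snd (h1 i) w = snd (h2 i) w" for w
      using fun_cong[OF eq, of "i # w"] h1 h2 True by (cases "w = []") (auto simp: graft_def)
    ultimately show ?thesis by (simp add: prod_eq_iff fun_eq_iff)
  qed (use h1 h2 in auto)
qed

lemma finite_tree_vertices [simp]: "finite (tree_vertices d t)"
proof -
  have "tree_vertices d t = {xs. set xs \<subseteq> {..<d} \<and> length xs \<le> t}"
    by (auto simp: tree_vertices_def)
  thus ?thesis by (simp add: finite_lists_length_le)
qed

lemma tree_vertices_Suc_minus_Nil:
  "tree_vertices d (Suc t) - {[]} =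
     (\<lambda>i. [i]) ` {..<d} \<union> (\<lambda>(i, w). i # w) ` ({..<d} \<times> (tree_vertices d t - {[]}))"
proof (intro equalityI subsetI)
  fix v assume v: "v \<in> tree_vertices d (Suc t) - {[]}"
  then obtain i w where "v = i # w" by (cases v) auto
  with v show "v \<in> (\<lambda>i. [i]) ` {..<d} \<union> (\<lambda>(i, w). i # w) ` ({..<d} \<times> (tree_vertices d t - {[]}))"
    by (cases "w = []") (auto simp: tree_vertices_def image_iff)
qed (auto simp: tree_vertices_def)

lemma prod_tree_vertices_Suc:
  fixes g :: "nat list \<Rightarrow> 'a :: comm_monoid_mult"
  shows "(\<Prod>v\<in>tree_vertices d (Suc t) - {[]}. g v)
       = (\<Prod>i<d. g [i] * (\<Prod>w\<in>tree_vertices d t - {[]}. g (i # w)))"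
  (is "_ = (\<Prod>i<d. g [i] * (\<Prod>w\<in>?V. g (i # w)))")
proof -
  have "(\<Prod>i<d. g [i] * (\<Prod>w\<in>?V. g (i # w)))
        = (\<Prod>i<d. g [i]) * (\<Prod>(i, w)\<in>{..<d} \<times> ?V. g (i # w))"
    by (simp add: prod.distrib prod.cartesian_product)
  also have "\<dots> = (\<Prod>v\<in>(\<lambda>i. [i]) ` {..<d}. g v) * (\<Prod>v\<in>(\<lambda>(i, w). i # w) ` ({..<d} \<times> ?V). g v)"
    by (simp add: prod.reindex inj_on_def case_prod_unfold)
  also have "\<dots> = (\<Prod>v\<in>tree_vertices d (Suc t) - {[]}. g v)"
    unfolding tree_vertices_Suc_minus_Nil
    by (rule prod.union_disjoint[symmetric]) (simp_all, auto simp: tree_vertices_def)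
  finally show ?thesis ..
qed

lemma set_edge_flips:
  assumes "0 < \<theta>" "\<theta> < 1"
  shows "set_pmf (edge_flips \<theta> d t) = {f. \<forall>v. v \<notin> tree_vertices d t - {[]} \<longrightarrow> f v = False}"
  using assms unfolding edge_flips_def
  by (subst set_Pi_pmf) (auto simp: PiE_dflt_def)

lemma finite_set_edge_flips: "finite (set_pmf (edge_flips \<theta> d t))"
  unfolding edge_flips_def by (subst set_Pi_pmf) (auto intro!: finite_PiE_dflt)

lemma pmf_edge_flips:
  "pmf (edge_flips \<theta> d t) f =
     (if \<forall>v. v \<notin> tree_vertices d t - {[]} \<longrightarrow> f v = False
      then \<Prod>v\<in>tree_vertices d t - {[]}. pmf (bernoulli_pmf ((1 - \<theta>) / 2)) (f v) else 0)"
  unfolding edge_flips_def by (rule pmf_Pi) simp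

lemma edge_flips_Suc:
  assumes th: "0 < \<theta>" "\<theta> < 1"
  shows "edge_flips \<theta> d (Suc t) =
    map_pmf (graft d False) (Pi_pmf {..<d} (False, \<lambda>_. False)
       (\<lambda>_. pair_pmf (bernoulli_pmf ((1 - \<theta>) / 2)) (edge_flips \<theta> d t)))"
    (is "?L = map_pmf _ ?P")
proof (rule pmf_eqI)
  fix f :: "nat list \<Rightarrow> bool"
  define V where "V = tree_vertices d t - {[]}"
  define V' where "V' = tree_vertices d (Suc t) - {[]}"
  define B where "B = bernoulli_pmf ((1 - \<theta>) / 2)"
  have setP: "set_pmf ?P = PiE_dflt {..<d} (False, \<lambda>_. False)
                              (\<lambda>_. UNIV \<times> {g. \<forall>v. v \<notin> V \<longrightarrow> g v = False})"
    using th by (subst set_Pi_pmf) (auto simp: set_edge_flips V_def o_def)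
  show "pmf ?L f = pmf (map_pmf (graft d False) ?P) f"
  proof (cases "\<forall>v. v \<notin> V' \<longrightarrow> f v = False")
    case False
    have "graft d False h v = False" if "h \<in> set_pmf ?P" "v \<notin> V'" for h v
    proof (cases v)
      case (Cons i w)
      have "(i, w) \<notin> {..<d} \<times> V" if "w \<noteq> []"
        using \<open>v \<notin> V'\<close> that unfolding Cons V'_def tree_vertices_Suc_minus_Nil V_def[symmetric]
        by (auto intro: rev_image_eqI)
      with \<open>h \<in> set_pmf ?P\<close> \<open>v \<notin> V'\<close> show ?thesis
        unfolding Cons setP V'_def tree_vertices_Suc_minus_Nil
        by (cases "w = []") (auto simp: graft_def PiE_dflt_def mem_Times_iff)
    qed (simp add: graft_def)
    hence "pmf (map_pmf (graft d False) ?P) f = 0"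
      using False by (intro pmf_map_outside) auto
    moreover have "pmf ?L f = 0" using False by (auto simp: pmf_edge_flips V'_def)
    ultimately show ?thesis by simp
  next
    case True
    define h where "h i = (if i < d then (f [i], \<lambda>w. if w \<in> V then f (i # w) else False)
                           else (False, \<lambda>_. False))" for i
    have hP: "h \<in> set_pmf ?P" unfolding setP by (auto simp: h_def PiE_dflt_def)
    have graft_h: "graft d False h = f"
    proof
      fix v
      show "graft d False h v = f v"
      proof (cases v)
        case Nil
        thus ?thesis using True by (simp add: graft_def V'_def)
      next
        case (Cons i w)
        show ?thesis
        proof (cases "i < d \<and> (w = [] \<or> w \<in> V)")
          case False
          hence "v \<notin> V'"
            unfolding V'_def tree_vertices_Suc_minus_Nil V_def[symmetric] using Cons by auto
          with False \<open>\<forall>v. v \<notin> V' \<longrightarrow> f v = False\<close> show ?thesis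
            by (auto simp: graft_def h_def Cons)
        qed (auto simp: graft_def h_def Cons)
      qed
    qed
    have inj: "inj_on (graft d False) (set_pmf ?P)"
      by (rule inj_on_subset[OF inj_on_graft]) (auto simp: setP PiE_dflt_def V_def)
    have "pmf (map_pmf (graft d False) ?P) f = pmf ?P h"
      using pmf_map_inj[OF inj hP] unfolding graft_h .
    also have "\<dots> = (\<Prod>i<d. pmf B (f [i]) * (\<Prod>w\<in>V. pmf B (f (i # w))))"
      by (subst pmf_Pi)
         (auto simp: h_def pmf_pair pmf_edge_flips V_def[symmetric] B_def[symmetric] intro!: prod.cong)
    also have "\<dots> = (\<Prod>v\<in>V'. pmf B (f v))"
      unfolding V_def V'_def by (rule prod_tree_vertices_Suc[symmetric])
    also have "\<dots> = pmf ?L f"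
      using True by (simp add: pmf_edge_flips V'_def B_def)
    finally show ?thesis ..
  qed
qed

lemma vertex_label_cong:
  assumes "\<And>k. k \<in> {1..length w} \<Longrightarrow> f (take k w) = g (take k w)"
  shows "vertex_label s f w = vertex_label s g w"
proof -
  have "{k \<in> {1..length w}. f (take k w)} = {k \<in> {1..length w}. g (take k w)}"
    using assms by auto
  thus ?thesis by (simp add: vertex_label_def)
qed

lemma vertex_label_Nil [simp]: "vertex_label s f [] = s"
  by (simp add: vertex_label_def)

lemma vertex_label_Cons:
  "vertex_label s f (i # w) = vertex_label (s \<noteq> f [i]) (\<lambda>u. f (i # u)) w"
proof -
  let ?K = "{k \<in> {1..length w}. f (i # take k w)}"
  have eq: "{k \<in> {1..Suc (length w)}. f (take k (i # w))} = (if f [i] then {1} else {}) \<union> Suc ` ?K"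
  proof (intro equalityI subsetI)
    fix k assume k: "k \<in> {k \<in> {1..Suc (length w)}. f (take k (i # w))}"
    show "k \<in> (if f [i] then {1} else {}) \<union> Suc ` ?K"
    proof (cases k)
      case (Suc k')
      with k show ?thesis by (cases k') auto
    qed (use k in auto)
  qed (auto split: if_splits)
  have "card {k \<in> {1..Suc (length w)}. f (take k (i # w))} = (if f [i] then 1 else 0) + card ?K"
    unfolding eq by (subst card_Un_disjoint) (auto simp: card_image)
  thus ?thesis by (auto simp: vertex_label_def)
qed

definition reveal :: "nat \<Rightarrow> nat \<Rightarrow> nat \<Rightarrow> bool \<Rightarrow> (nat list \<Rightarrow> bool) \<Rightarrow> nat list \<Rightarrow> bool option" where
  "reveal d m t s f v = (if v \<in> revealed_vertices d m t then Some (vertex_label s f v) else None)"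

lemma revealed_dist_conv_reveal:
  "revealed_dist \<theta> d m t s = map_pmf (reveal d m t s) (edge_flips \<theta> d t)"
  by (simp add: revealed_dist_def reveal_def[abs_def])

lemma finite_set_revealed_dist: "finite (set_pmf (revealed_dist \<theta> d m t s))"
  unfolding revealed_dist_def by (simp add: finite_set_edge_flips)

lemma reveal_graft:
  "reveal d m (Suc t) s (graft d False h) =
     graft d None (\<lambda>i. (if i < m then Some (s \<noteq> fst (h i)) else None,
                       reveal d m t (s \<noteq> fst (h i)) (snd (h i))))"
  (is "_ = graft d None ?h")
proof
  fix v
  show "reveal d m (Suc t) s (graft d False h) v = graft d None ?h v"
  proof (cases v)
    case (Cons i w)
    have "vertex_label s (graft d False h) (i # w) = vertex_label (s \<noteq> fst (h i)) (snd (h i)) w"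
      if "i < d" "w \<noteq> []"
      using that unfolding vertex_label_Cons
      by (simp add: graft_def, intro vertex_label_cong) auto
    moreover have "i # w \<in> revealed_vertices d m (Suc t) \<longleftrightarrow>
                     i < d \<and> (if w = [] then i < m else w \<in> revealed_vertices d m t)"
      by (auto simp: revealed_vertices_def tree_vertices_def)
    ultimately show ?thesis
      by (auto simp: Cons reveal_def graft_def vertex_label_Cons)
  qed (simp add: reveal_def graft_def revealed_vertices_def)
qed

definition child_revealed_dist ::
  "real \<Rightarrow> nat \<Rightarrow> nat \<Rightarrow> nat \<Rightarrow> bool \<Rightarrow> nat \<Rightarrow> (bool option \<times> (nat list \<Rightarrow> bool option)) pmf" where
  "child_revealed_dist \<theta> d m t s i = bind_pmf (bernoulli_pmf ((1 - \<theta>) / 2))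
     (\<lambda>b. map_pmf (\<lambda>y. (if i < m then Some (s \<noteq> b) else None, y)) (revealed_dist \<theta> d m t (s \<noteq> b)))"

lemma finite_set_child_revealed_dist: "finite (set_pmf (child_revealed_dist \<theta> d m t s i))"
  unfolding child_revealed_dist_def by (auto simp: finite_set_revealed_dist)

lemma Pi_pmf_map_pmf:
  assumes "finite A"
  shows "Pi_pmf A dflt (\<lambda>i. map_pmf (\<phi> i) (p i)) =
         map_pmf (\<lambda>h i. if i \<in> A then \<phi> i (h i) else dflt) (Pi_pmf A dflt' p)"
proof -
  have "Pi_pmf A dflt (\<lambda>i. map_pmf (\<phi> i) (p i))
        = bind_pmf (Pi_pmf A dflt' p) (\<lambda>h. Pi_pmf A dflt (\<lambda>i. return_pmf (\<phi> i (h i))))"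
    unfolding map_pmf_def by (rule Pi_pmf_bind[OF assms])
  thus ?thesis using assms by (simp add: map_pmf_def)
qed

lemma revealed_dist_Suc:
  assumes "0 < \<theta>" "\<theta> < 1"
  shows "revealed_dist \<theta> d m (Suc t) s =
         map_pmf (graft d None) (Pi_pmf {..<d} (None, \<lambda>_. None) (child_revealed_dist \<theta> d m t s))"
proof -
  define B where "B = bernoulli_pmf ((1 - \<theta>) / 2)"
  define \<phi> where "\<phi> i = (\<lambda>(b, g). (if i < m then Some (s \<noteq> b) else None, reveal d m t (s \<noteq> b) g))"
    for i
  have "child_revealed_dist \<theta> d m t s = (\<lambda>i. map_pmf (\<phi> i) (pair_pmf B (edge_flips \<theta> d t)))"
    by (simp add: fun_eq_iff child_revealed_dist_def \<phi>_def B_def revealed_dist_conv_reveal pair_pmf_def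
                  map_bind_pmf bind_map_pmf map_pmf_def bind_assoc_pmf bind_return_pmf)
  hence "Pi_pmf {..<d} (None, \<lambda>_. None) (child_revealed_dist \<theta> d m t s) =
        map_pmf (\<lambda>h i. if i \<in> {..<d} then \<phi> i (h i) else (None, \<lambda>_. None))
          (Pi_pmf {..<d} (False, \<lambda>_. False) (\<lambda>_. pair_pmf B (edge_flips \<theta> d t)))"
    by (simp only:) (rule Pi_pmf_map_pmf, simp)
  moreover have "reveal d m (Suc t) s \<circ> graft d False =
        graft d None \<circ> (\<lambda>h i. if i \<in> {..<d} then \<phi> i (h i) else (None, \<lambda>_. None))"
    unfolding o_def reveal_graft by (intro ext graft_cong) (simp add: \<phi>_def case_prod_unfold)
  ultimately show ?thesis
    unfolding revealed_dist_conv_reveal edge_flips_Suc[OF assms] B_def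
    by (simp add: pmf.map_comp)
qed

lemma bhattacharyya_revealed_dist_0:
  "bhattacharyya (revealed_dist \<theta> d m 0 True) (revealed_dist \<theta> d m 0 False) = 1"
proof -
  have "revealed_vertices d m 0 = {}" by (auto simp: revealed_vertices_def tree_vertices_def)
  hence "revealed_dist \<theta> d m 0 s = return_pmf (\<lambda>_. None)" for s
    by (simp add: revealed_dist_def)
  thus ?thesis by (simp add: bhattacharyya_def)
qed

lemma bhattacharyya_child_revealed_dist_ge:
  fixes d m t i :: nat
  assumes "0 < \<theta>" "\<theta> < 1"
  defines "\<beta> \<equiv> bhattacharyya (revealed_dist \<theta> d m t True) (revealed_dist \<theta> d m t False)"
  shows "bhattacharyya (child_revealed_dist \<theta> d m t True i) (child_revealed_dist \<theta> d m t False i)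
           \<ge> (if i < m then 1 - \<theta>\<^sup>2 else 1 - \<theta>\<^sup>2 * (1 - \<beta>))"
proof -
  define q where "q = (1 - \<theta>) / 2"
  define M where "M c = map_pmf (\<lambda>y. (if i < m then Some c else None, y)) (revealed_dist \<theta> d m t c)"
    for c
  have q: "0 \<le> q" "q \<le> 1" using assms by (auto simp: q_def)
  have fin: "finite (set_pmf (M c))" for c by (simp add: M_def finite_set_revealed_dist)
  have "1 - bhattacharyya (child_revealed_dist \<theta> d m t True i) (child_revealed_dist \<theta> d m t False i)
          \<le> ((1 - q) - q)\<^sup>2 * (1 - bhattacharyya (M True) (M False))"
    by (rule bhattacharyya_mixture[OF fin fin])
       (use q in \<open>simp_all add: child_revealed_dist_def pmf_bind q_def[symmetric] M_def\<close>)
  also have "(1 - q) - q = \<theta>" by (simp add: q_def field_simps)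
  finally have contract: "1 - bhattacharyya (child_revealed_dist \<theta> d m t True i)
                                           (child_revealed_dist \<theta> d m t False i)
                           \<le> \<theta>\<^sup>2 * (1 - bhattacharyya (M True) (M False))" .
  show ?thesis
  proof (cases "i < m")
    case True
    have "\<theta>\<^sup>2 * (1 - bhattacharyya (M True) (M False)) \<le> \<theta>\<^sup>2 * 1"
      using bhattacharyya_nonneg[of "M True" "M False"] by (intro mult_left_mono) auto
    thus ?thesis using contract True by simp
  next
    case False
    have "\<beta> \<le> bhattacharyya (M True) (M False)"
      unfolding M_def \<beta>_def using False
      by (simp add: bhattacharyya_map_pmf_ge finite_set_revealed_dist)
    hence "\<theta>\<^sup>2 * (1 - bhattacharyya (M True) (M False)) \<le> \<theta>\<^sup>2 * (1 - \<beta>)"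
      by (intro mult_left_mono) auto
    thus ?thesis using contract False by simp
  qed
qed

lemma bhattacharyya_revealed_dist_Suc_ge:
  assumes th: "0 < \<theta>" "\<theta> < 1" and "m \<le> d"
  defines "\<beta> \<equiv> \<lambda>t. bhattacharyya (revealed_dist \<theta> d m t True) (revealed_dist \<theta> d m t False)"
  shows "\<beta> (Suc t) \<ge> (1 - \<theta>\<^sup>2) ^ m * (1 - \<theta>\<^sup>2 * (1 - \<beta> t)) ^ (d - m)"
proof -
  let ?c = "\<lambda>i. if i < m then 1 - \<theta>\<^sup>2 else 1 - \<theta>\<^sup>2 * (1 - \<beta> t)"
  have "\<theta>\<^sup>2 < 1" using th by (simp add: power_less_one_iff)
  moreover have "0 \<le> \<theta>\<^sup>2 * \<beta> t" by (simp add: \<beta>_def bhattacharyya_nonneg)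
  ultimately have c_nonneg: "0 \<le> ?c i" for i
    by (auto simp: algebra_simps)
  have "{..<d} \<inter> {i. i < m} = {..<m}" "{..<d} \<inter> - {i. i < m} = {m..<d}" using \<open>m \<le> d\<close> by auto
  hence "(1 - \<theta>\<^sup>2) ^ m * (1 - \<theta>\<^sup>2 * (1 - \<beta> t)) ^ (d - m) = (\<Prod>i<d. ?c i)"
    by (simp add: prod.If_cases)
  also have "\<dots> \<le> (\<Prod>i<d. bhattacharyya (child_revealed_dist \<theta> d m t True i)
                                       (child_revealed_dist \<theta> d m t False i))"
  proof (rule prod_mono)
    fix i
    show "0 \<le> ?c i \<and> ?c i \<le> bhattacharyya (child_revealed_dist \<theta> d m t True i)
                                            (child_revealed_dist \<theta> d m t False i)"
      using c_nonneg[of i] bhattacharyya_child_revealed_dist_ge[OF th, where d=d and m=m and t=t and i=i]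
      by (simp add: \<beta>_def split: if_splits)
  qed
  also have "\<dots> = bhattacharyya (Pi_pmf {..<d} (None, \<lambda>_. None) (child_revealed_dist \<theta> d m t True))
                               (Pi_pmf {..<d} (None, \<lambda>_. None) (child_revealed_dist \<theta> d m t False))"
    by (rule bhattacharyya_Pi_pmf[symmetric]) (auto simp: finite_set_child_revealed_dist)
  also have "\<dots> \<le> \<beta> (Suc t)"
    unfolding \<beta>_def revealed_dist_Suc[OF th]
    by (rule bhattacharyya_map_pmf_ge)
       (simp add: set_Pi_pmf finite_set_child_revealed_dist finite_PiE_dflt)
  finally show ?thesis .
qed

lemma bhattacharyya_revealed_dist_ge_exp:
  assumes th: "0 < \<theta>" "\<theta> < 1" and "m \<le> d" and "0 \<le> G" "\<theta>\<^sup>2 * G \<le> 1"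
    and step: "exp (- G) \<le> (1 - \<theta>\<^sup>2) ^ m * (1 - \<theta>\<^sup>2 * G) ^ (d - m)"
  shows "exp (- G) \<le> bhattacharyya (revealed_dist \<theta> d m t True) (revealed_dist \<theta> d m t False)"
proof (induction t)
  case 0
  show ?case using \<open>0 \<le> G\<close> by (simp add: bhattacharyya_revealed_dist_0)
next
  case (Suc t)
  define \<beta> where "\<beta> t = bhattacharyya (revealed_dist \<theta> d m t True) (revealed_dist \<theta> d m t False)"
    for t
  have "1 - \<beta> t \<le> G"
    using Suc exp_ge_add_one_self[of "- G"] by (simp add: \<beta>_def)
  hence "1 - \<theta>\<^sup>2 * G \<le> 1 - \<theta>\<^sup>2 * (1 - \<beta> t)"
    by (simp add: mult_left_mono)
  hence "(1 - \<theta>\<^sup>2 * G) ^ (d - m) \<le> (1 - \<theta>\<^sup>2 * (1 - \<beta> t)) ^ (d - m)"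
    using \<open>\<theta>\<^sup>2 * G \<le> 1\<close> by (intro power_mono) auto
  moreover have "0 \<le> 1 - \<theta>\<^sup>2" using th by (simp add: power_le_one)
  ultimately have "(1 - \<theta>\<^sup>2) ^ m * (1 - \<theta>\<^sup>2 * G) ^ (d - m)
                     \<le> (1 - \<theta>\<^sup>2) ^ m * (1 - \<theta>\<^sup>2 * (1 - \<beta> t)) ^ (d - m)"
    by (intro mult_left_mono) auto
  also have "\<dots> \<le> \<beta> (Suc t)"
    unfolding \<beta>_def by (rule bhattacharyya_revealed_dist_Suc_ge[OF th \<open>m \<le> d\<close>])
  finally show ?case using step by (simp add: \<beta>_def)
qed

text \<open>Uses \<open>ln (1 - y) = ln (1 + 3y) - L\<close> with \<open>ln (1 + 3y) \<ge> 3y/4\<close> and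
  \<open>ln (1 - z) \<ge> -z - 2z\<^sup>2\<close> for \<open>z = yG \<le> 1/2\<close>; the gain \<open>m ln (1 + 3y) \<ge> 3y/2\<close> from
  \<open>m \<ge> 2\<close> revealed children absorbs the quadratic error term.\<close>
lemma exp_neg_le_child_factors:
  fixes y G L :: real and m k :: nat
  assumes y: "0 < y" "y < 1" and "m \<ge> 2"
    and k: "real k * y < 1"
    and L: "L = ln (1 + 4 * y / (1 - y))"
    and G: "G * (1 - real k * y) = real m * L" "0 \<le> G" "G < 1/2"
  shows "exp (- G) \<le> (1 - y) ^ m * (1 - y * G) ^ k"
proof -
  define x where "x = real k * y"
  have "y * G \<le> 1 * G" using y G by (intro mult_right_mono) auto
  hence yG: "0 \<le> y * G" "y * G \<le> 1/2" using y G by auto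
  have ln_1my: "ln (1 - y) = ln (1 + 3 * y) - L"
  proof -
    have "1 + 4 * y / (1 - y) = (1 + 3 * y) / (1 - y)" using y by (simp add: field_simps)
    thus ?thesis using y by (simp add: L ln_divide_pos)
  qed
  have ln3: "ln (1 + 3 * y) \<ge> 3 * y / 4"
  proof -
    have "ln (1 / (1 + 3 * y)) \<le> 1 / (1 + 3 * y) - 1" using y by (intro ln_le_minus_one) auto
    hence "ln (1 + 3 * y) \<ge> 3 * y / (1 + 3 * y)" using y by (simp add: ln_div field_simps)
    moreover have "3 * y / (1 + 3 * y) \<ge> 3 * y / 4" using y by (intro divide_left_mono) auto
    ultimately show ?thesis by linarith
  qed
  have pos: "0 < 1 - y" "0 < 1 - y * G" using y yG by auto
  have "ln ((1 - y) ^ m * (1 - y * G) ^ k) = real m * ln (1 - y) + real k * ln (1 - y * G)"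
    using pos by (simp add: ln_mult ln_realpow)
  also have "\<dots> \<ge> real m * (ln (1 + 3 * y) - L) + real k * (- (y * G) - 2 * (y * G)\<^sup>2)"
    unfolding ln_1my using ln_one_minus_pos_lower_bound[OF yG]
    by (intro add_left_mono mult_left_mono) auto
  finally have A: "ln ((1 - y) ^ m * (1 - y * G) ^ k) \<ge>
                   real m * ln (1 + 3 * y) - real m * L - x * G - 2 * x * y * G\<^sup>2"
    by (simp add: x_def algebra_simps power2_eq_square)
  have "G * G \<le> (1/2) * (1/2)" using G by (intro mult_mono) auto
  hence "x * G\<^sup>2 \<le> 1 * (1/4)"
    using G k y by (intro mult_mono) (auto simp: x_def power2_eq_square)
  hence "(2 * y) * (x * G\<^sup>2) \<le> (2 * y) * (1/4)"
    using y by (intro mult_left_mono) auto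
  hence C: "2 * x * y * G\<^sup>2 \<le> y / 2" by (simp add: algebra_simps)
  have "real m * ln (1 + 3 * y) \<ge> 2 * ln (1 + 3 * y)"
    using \<open>m \<ge> 2\<close> y by (intro mult_right_mono) auto
  moreover have "real m * L = G - x * G" using G(1) by (simp add: x_def algebra_simps)
  ultimately have "- G \<le> ln ((1 - y) ^ m * (1 - y * G) ^ k)"
    using A C ln3 y by linarith
  thus ?thesis using pos by (simp add: ln_ge_iff)
qed

lemma tv_dist_le:
  assumes "\<And>A. \<bar>measure_pmf.prob p A - measure_pmf.prob q A\<bar> \<le> \<epsilon>"
  shows "tv_dist p q \<le> \<epsilon>"
  unfolding tv_dist_def by (rule cSUP_least) (auto simp: assms)

lemma tv_dist_nonneg: "0 \<le> tv_dist p q"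
proof -
  have "\<bar>measure_pmf.prob p A - measure_pmf.prob q A\<bar> \<le> 1" for A
    using measure_pmf.prob_le_1[of p A] measure_pmf.prob_le_1[of q A]
          measure_nonneg[of p A] measure_nonneg[of q A]
    unfolding abs_le_iff by (intro conjI; linarith)
  thus ?thesis unfolding tv_dist_def by (intro cSUP_upper2[of _ _ "{}"] bdd_aboveI2) auto
qed

lemma two_point_testing_error_ge:
  fixes D :: "bool \<Rightarrow> 'a pmf"
  assumes "\<And>A. \<bar>measure_pmf.prob (D True) A - measure_pmf.prob (D False) A\<bar> \<le> \<epsilon>"
  shows "(INF \<Phi>::'a \<Rightarrow> bool. SUP s. measure_pmf.prob (D s) {x. \<Phi> x \<noteq> s}) \<ge> 1/2 - \<epsilon>/2"
proof (rule cINF_greatest)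
  fix \<Phi> :: "'a \<Rightarrow> bool"
  let ?err = "\<lambda>s. measure_pmf.prob (D s) {x. \<Phi> x \<noteq> s}"
  have bdd: "bdd_above (range ?err)" by (rule bdd_above_finite) simp
  have "?err True \<le> (SUP s. ?err s)" "?err False \<le> (SUP s. ?err s)"
    by (rule cSUP_upper[OF _ bdd], simp)+
  moreover have "?err True = 1 - measure_pmf.prob (D True) {x. \<Phi> x}"
    using measure_pmf.prob_compl[of "{x. \<Phi> x}" "D True"] by (simp add: Collect_neg_eq Compl_eq_Diff_UNIV)
  moreover have "?err False = measure_pmf.prob (D False) {x. \<Phi> x}" by simp
  ultimately show "1/2 - \<epsilon>/2 \<le> (SUP s. ?err s)"
    using assms[of "{x. \<Phi> x}"] by linarith
qed simp

lemma revealed_dist_prob_diff_le: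
  fixes \<theta> \<delta> :: real and d m t :: nat
  assumes th: "0 < \<theta>" "\<theta> < 1" and "\<delta> \<le> 1" and dm: "\<delta> * real d = real m"
    and h1: "\<delta> * real d > 1" and h2: "(1 - \<delta>) * \<theta>\<^sup>2 * real d < 1"
    and h3: "2 * \<delta> * real d * ln (1 + 4 * \<theta>\<^sup>2 / (1 - \<theta>\<^sup>2)) < (1 - (1 - \<delta>) * \<theta>\<^sup>2 * real d)\<^sup>2"
  defines "G \<equiv> \<delta> * real d * ln (1 + 4 * \<theta>\<^sup>2 / (1 - \<theta>\<^sup>2)) / (1 - (1 - \<delta>) * \<theta>\<^sup>2 * real d)"
  shows "\<bar>measure_pmf.prob (revealed_dist \<theta> d m t True) A
           - measure_pmf.prob (revealed_dist \<theta> d m t False) A\<bar> \<le> sqrt (2 * G)"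
proof -
  define L where "L = ln (1 + 4 * \<theta>\<^sup>2 / (1 - \<theta>\<^sup>2))"
  define x where "x = (1 - \<delta>) * \<theta>\<^sup>2 * real d"
  have y: "0 < \<theta>\<^sup>2" "\<theta>\<^sup>2 < 1" using th by (auto simp: power_less_one_iff)
  have "m \<le> d" using dm \<open>\<delta> \<le> 1\<close> mult_right_mono[of \<delta> 1 "real d"] by simp
  have x: "x = real (d - m) * \<theta>\<^sup>2" "x < 1"
    using \<open>m \<le> d\<close> dm h2 by (simp_all add: x_def of_nat_diff algebra_simps)
  have "0 \<le> L" unfolding L_def using y by (intro ln_ge_zero) auto
  have GL: "G * (1 - x) = real m * L" using x dm by (simp add: G_def L_def x_def)
  have "0 \<le> G" using x \<open>0 \<le> L\<close> h1 by (simp add: G_def L_def x_def)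
  have "2 * G * (1 - x) < (1 - x) * (1 - x)"
    using h3 GL dm by (simp add: L_def x_def power2_eq_square mult.assoc)
  hence "2 * G < 1 - x" using x by (simp add: mult_less_cancel_right)
  moreover have "0 \<le> x" using x(1) by simp
  ultimately have "G < 1/2" by linarith
  hence step: "exp (- G) \<le> (1 - \<theta>\<^sup>2) ^ m * (1 - \<theta>\<^sup>2 * G) ^ (d - m)"
    using exp_neg_le_child_factors[OF y, of m "d - m" L G] h1 dm x GL \<open>0 \<le> G\<close>
    by (simp add: L_def mult.commute)
  have \<theta>G: "\<theta>\<^sup>2 * G \<le> 1" using y \<open>G < 1/2\<close> \<open>0 \<le> G\<close> mult_le_one[of "\<theta>\<^sup>2" G] by simp
  let ?b = "bhattacharyya (revealed_dist \<theta> d m t True) (revealed_dist \<theta> d m t False)"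
  have "exp (- G) \<le> ?b" by (rule bhattacharyya_revealed_dist_ge_exp[OF th \<open>m \<le> d\<close> \<open>0 \<le> G\<close> \<theta>G step])
  hence "(exp (- G))\<^sup>2 \<le> ?b\<^sup>2" by (intro power_mono) auto
  moreover have "(exp (- G))\<^sup>2 = exp (- (2 * G))" by (simp add: power2_eq_square flip: exp_add)
  moreover have "1 - 2 * G \<le> exp (- (2 * G))" using exp_ge_add_one_self[of "- (2 * G)"] by simp
  ultimately have "sqrt (1 - ?b\<^sup>2) \<le> sqrt (2 * G)" by (intro real_sqrt_le_mono) linarith
  with measure_pmf_prob_diff_le_bhattacharyya[OF finite_set_revealed_dist finite_set_revealed_dist]
  show ?thesis by (rule order_trans)
qed

theorem theorem3:
  "\<exists>C>0. \<forall>(\<theta>::real) (\<delta>::real) (d::nat) (m::nat) (t::nat).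
     0 < \<theta> \<and> \<theta> < 1 \<and> 0 \<le> \<delta> \<and> \<delta> \<le> 1 \<and> \<delta> * real d = real m \<and>
     \<delta> * real d > 1 \<and> (1 - \<delta>) * \<theta>\<^sup>2 * real d < 1 \<and>
     2 * \<delta> * real d * ln (1 + 4 * \<theta>\<^sup>2 / (1 - \<theta>\<^sup>2)) < (1 - (1 - \<delta>) * \<theta>\<^sup>2 * real d)\<^sup>2 \<and>
     t > 0 \<longrightarrow>
       (tv_dist (revealed_dist \<theta> d m t True) (revealed_dist \<theta> d m t False))\<^sup>2
         \<le> 2 * \<delta> * real d * ln (1 + 4 * \<theta>\<^sup>2 / (1 - \<theta>\<^sup>2)) / (1 - (1 - \<delta>) * \<theta>\<^sup>2 * real d)
     \<and> (INF \<Phi>::(nat list \<Rightarrow> bool option) \<Rightarrow> bool.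
          SUP s::bool. measure_pmf.prob (revealed_dist \<theta> d m t s) {x. \<Phi> x \<noteq> s})
         \<ge> 1/2 - C * sqrt (\<delta> * real d * ln (1 + 4 * \<theta>\<^sup>2 / (1 - \<theta>\<^sup>2))
                             / (1 - (1 - \<delta>) * \<theta>\<^sup>2 * real d))"
proof (rule exI[of _ 1], intro conjI allI impI)
  fix \<theta> \<delta> :: real and d m t :: nat
  assume H: "0 < \<theta> \<and> \<theta> < 1 \<and> 0 \<le> \<delta> \<and> \<delta> \<le> 1 \<and> \<delta> * real d = real m \<and>
     \<delta> * real d > 1 \<and> (1 - \<delta>) * \<theta>\<^sup>2 * real d < 1 \<and>
     2 * \<delta> * real d * ln (1 + 4 * \<theta>\<^sup>2 / (1 - \<theta>\<^sup>2)) < (1 - (1 - \<delta>) * \<theta>\<^sup>2 * real d)\<^sup>2 \<and> t > 0"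
  define G
    where "G = \<delta> * real d * ln (1 + 4 * \<theta>\<^sup>2 / (1 - \<theta>\<^sup>2)) / (1 - (1 - \<delta>) * \<theta>\<^sup>2 * real d)"
  have diff: "\<bar>measure_pmf.prob (revealed_dist \<theta> d m t True) A
                          - measure_pmf.prob (revealed_dist \<theta> d m t False) A\<bar> \<le> sqrt (2 * G)" for A
    unfolding G_def using H by (intro revealed_dist_prob_diff_le) auto
  have "0 \<le> G" using diff[of "{}"] by simp
  have "(tv_dist (revealed_dist \<theta> d m t True) (revealed_dist \<theta> d m t False))\<^sup>2 \<le> (sqrt (2 * G))\<^sup>2"
    by (intro power_mono tv_dist_le diff tv_dist_nonneg)
  also have "\<dots> = 2 * G" using \<open>0 \<le> G\<close> by simp
  finally show "(tv_dist (revealed_dist \<theta> d m t True) (revealed_dist \<theta> d m t False))\<^sup>2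
          \<le> 2 * \<delta> * real d * ln (1 + 4 * \<theta>\<^sup>2 / (1 - \<theta>\<^sup>2)) / (1 - (1 - \<delta>) * \<theta>\<^sup>2 * real d)"
    by (simp add: G_def mult.assoc)
  have "sqrt (2 * G) = sqrt 2 * sqrt G" by (simp add: real_sqrt_mult)
  also have "\<dots> \<le> 2 * sqrt G" using sqrt2_less_2 \<open>0 \<le> G\<close> by (intro mult_right_mono) auto
  finally have "1/2 - sqrt G \<le> 1/2 - sqrt (2 * G) / 2" by simp
  also have "\<dots> \<le> (INF \<Phi>::(nat list \<Rightarrow> bool option) \<Rightarrow> bool.
                   SUP s. measure_pmf.prob (revealed_dist \<theta> d m t s) {x. \<Phi> x \<noteq> s})"
    by (rule two_point_testing_error_ge[of "revealed_dist \<theta> d m t", OF diff])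
  finally show "(INF \<Phi>::(nat list \<Rightarrow> bool option) \<Rightarrow> bool.
          SUP s. measure_pmf.prob (revealed_dist \<theta> d m t s) {x. \<Phi> x \<noteq> s})
         \<ge> 1/2 - 1 * sqrt (\<delta> * real d * ln (1 + 4 * \<theta>\<^sup>2 / (1 - \<theta>\<^sup>2))
                             / (1 - (1 - \<delta>) * \<theta>\<^sup>2 * real d))"
    by (simp add: G_def)
qed simp

end
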